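(* Let $X$ be a d-space and let $X=X_0\supseteq X_1\supseteq\dots\supseteq X_n=A$ together with functors $P_i:\vec\pi_1(X,X_{i-1})\to\vec\pi_1(X,X_i)$ ($1\le i\le n$) be an extremal model of $X$. Then $\mathrm{Ext}(\vec\pi_1(X))\subseteq \mathrm{Ext}(\vec\pi_1(X,A))$; consequently the fundamental bipartite graph $\vec\pi_1(X,\mathrm{Ext}(X))$ of $X$ is a (full) subcategory of the fundamental bipartite graph $\vec\pi_1(X,\mathrm{Ext}(\vec\pi_1(X,A)))$ of $\vec\pi_1(X,A)$, i.e. the extremal model induces an injection of fundamental bipartite graphs.
   Context: A d-space is a topological space $X$ with a set $dX$ of continuous paths $[0,1]\to X$ (dipaths) containing all constant paths, closed under precomposition with continuous non-decreasing maps $[0,1]\to[0,1]$, and closed under concatenation. Any subset of a d-space is a d-space whose dipaths are the dipaths with image in the subset. $\vec I$ denotes $[0,1]$ with all continuous non-decreasing paths as dipaths; products of d-spaces have as dipaths the pairs of dipaths. The fundamental category $\vec\pi_1(X)$ has as objects the points of $X$ and as morphisms $a\to b$ the classes $[\gamma]$ of dipaths from $a$ to $b$ under the equivalence relation generated by: $\gamma\sim\gamma'$ if there is a dimap $H:\vec I\times\vec I\to X$ with $H(t,0)=\gamma(t)$, $H(t,1)=\gamma'(t)$, $H(0,s)=a$, $H(1,s)=b$; composition is concatenation. For $A\subseteq X$, $\vec\pi_1(X,A)$ is the full subcategory of $\vec\pi_1(X)$ on the objects in $A$. For a category $\mathcal C$, put $x\le y$ iff there is a morphism $x\to y$; an object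 $a$ is minimal if $x\le a$ implies $x=a$, maximal if $a\le x$ implies $x=a$, and extremal if it is minimal or maximal; $\mathrm{Ext}(\mathcal C)$ is the set of extremal objects, and $\mathrm{Ext}(X):=\mathrm{Ext}(\vec\pi_1(X))$. The fundamental bipartite graph of $\vec\pi_1(X,A)$ is $\vec\pi_1(X,\mathrm{Ext}(\vec\pi_1(X,A)))$, and that of $X$ is $\vec\pi_1(X,\mathrm{Ext}(X))$. For $A\subseteq B\subseteq X$ with inclusion $\iota:\vec\pi_1(X,A)\to\vec\pi_1(X,B)$: a future retract is a functor $P:\vec\pi_1(X,B)\to\vec\pi_1(X,A)$ left adjoint to $\iota$ whose unit $\eta$ satisfies $\eta_a=\mathrm{id}_a$ for all $a\in A$ (so $P\circ\iota=\mathrm{Id}$); a past retract is a functor $P$ right adjoint to $\iota$ whose counit $\varepsilon$ satisfies $\varepsilon_a=\mathrm{id}_a$ for all $a\in A$. An extremal model of $X$ is a chain of subsets $X=X_0\supseteq X_1\supseteq\dots\supseteq X_n=A$ with functors $P_i:\vec\pi_1(X,X_{i-1})\to\vec\pi_1(X,X_i)$, each a future retract or a past retract, such that $\mathrm{Ext}(X)\subseteq A$. *)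

theory Defs
  imports "HOL-Analysis.Analysis"
begin

text \<open>Dipaths of the directed interval: continuous non-decreasing maps [0,1] -> [0,1].
  Paths are functions real => 'a; only their values on [0,1] matter.\<close>
definition dipath_I :: "(real \<Rightarrow> real) \<Rightarrow> bool" where
  "dipath_I \<phi> \<longleftrightarrow> continuous_on {0..1} \<phi> \<and> \<phi> ` {0..1} \<subseteq> {0..1} \<and>
     (\<forall>s\<in>{0..1}. \<forall>t\<in>{0..1}. s \<le> t \<longrightarrow> \<phi> s \<le> \<phi> t)"

definition djoin :: "(real \<Rightarrow> 'a) \<Rightarrow> (real \<Rightarrow> 'a) \<Rightarrow> real \<Rightarrow> 'a" where
  "djoin \<gamma> \<delta> = (\<lambda>t. if t \<le> 1/2 then \<gamma> (2*t) else \<delta> (2*t - 1))"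

definition d_space :: "'a topology \<Rightarrow> (real \<Rightarrow> 'a) set \<Rightarrow> bool" where
  "d_space X D \<longleftrightarrow>
     (\<forall>\<gamma>\<in>D. continuous_map (top_of_set {0..(1::real)}) X \<gamma>) \<and>
     (\<forall>x\<in>topspace X. (\<lambda>t. x) \<in> D) \<and>
     (\<forall>\<gamma>\<in>D. \<forall>\<phi>. dipath_I \<phi> \<longrightarrow> \<gamma> \<circ> \<phi> \<in> D) \<and>
     (\<forall>\<gamma>\<in>D. \<forall>\<delta>\<in>D. \<gamma> 1 = \<delta> 0 \<longrightarrow> djoin \<gamma> \<delta> \<in> D)"

definition dimap_square :: "'a topology \<Rightarrow> (real \<Rightarrow> 'a) set \<Rightarrow> (real \<times> real \<Rightarrow> 'a) \<Rightarrow> bool" where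
  "dimap_square X D H \<longleftrightarrow>
     continuous_map (top_of_set ({0..1} \<times> {0..(1::real)})) X H \<and>
     (\<forall>\<alpha> \<beta>. dipath_I \<alpha> \<and> dipath_I \<beta> \<longrightarrow> (\<lambda>t. H (\<alpha> t, \<beta> t)) \<in> D)"

definition dihom_step :: "'a topology \<Rightarrow> (real \<Rightarrow> 'a) set \<Rightarrow> (real \<Rightarrow> 'a) \<Rightarrow> (real \<Rightarrow> 'a) \<Rightarrow> bool" where
  "dihom_step X D \<gamma> \<gamma>' \<longleftrightarrow> \<gamma> \<in> D \<and> \<gamma>' \<in> D \<and>
     (\<exists>H. dimap_square X D H \<and>
        (\<forall>t\<in>{0..1}. H (t, 0) = \<gamma> t \<and> H (t, 1) = \<gamma>' t) \<and>
        (\<forall>s\<in>{0..1}. H (0, s) = \<gamma> 0 \<and> H (1, s) = \<gamma> 1))"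

definition dihom_eq :: "'a topology \<Rightarrow> (real \<Rightarrow> 'a) set \<Rightarrow> (real \<Rightarrow> 'a) \<Rightarrow> (real \<Rightarrow> 'a) \<Rightarrow> bool" where
  "dihom_eq X D = (\<lambda>\<gamma> \<delta>. dihom_step X D \<gamma> \<delta> \<or> dihom_step X D \<delta> \<gamma>)\<^sup>*\<^sup>*"

text \<open>Morphisms of the fundamental category are equivalence classes of dipaths.\<close>
definition dmor_class :: "'a topology \<Rightarrow> (real \<Rightarrow> 'a) set \<Rightarrow> (real \<Rightarrow> 'a) \<Rightarrow> (real \<Rightarrow> 'a) set" where
  "dmor_class X D \<gamma> = {\<delta>. dihom_eq X D \<gamma> \<delta>}"

definition dHom :: "'a topology \<Rightarrow> (real \<Rightarrow> 'a) set \<Rightarrow> 'a \<Rightarrow> 'a \<Rightarrow> (real \<Rightarrow> 'a) set set" where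
  "dHom X D a b = dmor_class X D ` {\<gamma>\<in>D. \<gamma> 0 = a \<and> \<gamma> 1 = b}"

definition did :: "'a topology \<Rightarrow> (real \<Rightarrow> 'a) set \<Rightarrow> 'a \<Rightarrow> (real \<Rightarrow> 'a) set" where
  "did X D a = dmor_class X D (\<lambda>t. a)"

text \<open>Composition in diagrammatic order: dcomp f g is "first f, then g" (concatenation).\<close>
definition dcomp :: "'a topology \<Rightarrow> (real \<Rightarrow> 'a) set \<Rightarrow> (real \<Rightarrow> 'a) set \<Rightarrow> (real \<Rightarrow> 'a) set \<Rightarrow> (real \<Rightarrow> 'a) set" where
  "dcomp X D f g = dmor_class X D (djoin (SOME \<gamma>. \<gamma> \<in> f) (SOME \<delta>. \<delta> \<in> g))"

definition dfunctor :: "'a topology \<Rightarrow> (real \<Rightarrow> 'a) set \<Rightarrow> 'a set \<Rightarrow> 'a set \<Rightarrow>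
    ('a \<Rightarrow> 'a) \<Rightarrow> ((real \<Rightarrow> 'a) set \<Rightarrow> (real \<Rightarrow> 'a) set) \<Rightarrow> bool" where
  "dfunctor X D B A Fo Fm \<longleftrightarrow>
     (\<forall>b\<in>B. Fo b \<in> A) \<and>
     (\<forall>a\<in>B. \<forall>b\<in>B. \<forall>f\<in>dHom X D a b. Fm f \<in> dHom X D (Fo a) (Fo b)) \<and>
     (\<forall>a\<in>B. Fm (did X D a) = did X D (Fo a)) \<and>
     (\<forall>a\<in>B. \<forall>b\<in>B. \<forall>c\<in>B. \<forall>f\<in>dHom X D a b. \<forall>g\<in>dHom X D b c.
        Fm (dcomp X D f g) = dcomp X D (Fm f) (Fm g))"

text \<open>Future retract: P left adjoint to the inclusion of the full subcategory on A into
  that on B, with unit eta (natural, universal) satisfying eta_a = id_a for a in A.\<close>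
definition future_retract :: "'a topology \<Rightarrow> (real \<Rightarrow> 'a) set \<Rightarrow> 'a set \<Rightarrow> 'a set \<Rightarrow>
    ('a \<Rightarrow> 'a) \<Rightarrow> ((real \<Rightarrow> 'a) set \<Rightarrow> (real \<Rightarrow> 'a) set) \<Rightarrow> bool" where
  "future_retract X D B A Po Pm \<longleftrightarrow> A \<subseteq> B \<and> dfunctor X D B A Po Pm \<and>
     (\<exists>\<eta>. (\<forall>b\<in>B. \<eta> b \<in> dHom X D b (Po b)) \<and>
        (\<forall>b\<in>B. \<forall>b'\<in>B. \<forall>f\<in>dHom X D b b'. dcomp X D (\<eta> b) (Pm f) = dcomp X D f (\<eta> b')) \<and>
        (\<forall>b\<in>B. \<forall>a\<in>A. \<forall>f\<in>dHom X D b a. \<exists>!g. g \<in> dHom X D (Po b) a \<and> dcomp X D (\<eta> b) g = f) \<and>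
        (\<forall>a\<in>A. \<eta> a = did X D a))"

text \<open>Past retract: P right adjoint to the inclusion, with counit eps (natural, universal)
  satisfying eps_a = id_a for a in A.\<close>
definition past_retract :: "'a topology \<Rightarrow> (real \<Rightarrow> 'a) set \<Rightarrow> 'a set \<Rightarrow> 'a set \<Rightarrow>
    ('a \<Rightarrow> 'a) \<Rightarrow> ((real \<Rightarrow> 'a) set \<Rightarrow> (real \<Rightarrow> 'a) set) \<Rightarrow> bool" where
  "past_retract X D B A Po Pm \<longleftrightarrow> A \<subseteq> B \<and> dfunctor X D B A Po Pm \<and>
     (\<exists>\<epsilon>. (\<forall>b\<in>B. \<epsilon> b \<in> dHom X D (Po b) b) \<and>
        (\<forall>b\<in>B. \<forall>b'\<in>B. \<forall>f\<in>dHom X D b b'. dcomp X D (Pm f) (\<epsilon> b') = dcomp X D (\<epsilon> b) f) \<and>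
        (\<forall>b\<in>B. \<forall>a\<in>A. \<forall>f\<in>dHom X D a b. \<exists>!g. g \<in> dHom X D a (Po b) \<and> dcomp X D g (\<epsilon> b) = f) \<and>
        (\<forall>a\<in>A. \<epsilon> a = did X D a))"

definition dle :: "'a topology \<Rightarrow> (real \<Rightarrow> 'a) set \<Rightarrow> 'a \<Rightarrow> 'a \<Rightarrow> bool" where
  "dle X D x y \<longleftrightarrow> dHom X D x y \<noteq> {}"

definition Ext :: "'a topology \<Rightarrow> (real \<Rightarrow> 'a) set \<Rightarrow> 'a set \<Rightarrow> 'a set" where
  "Ext X D A = {a\<in>A. (\<forall>x\<in>A. dle X D x a \<longrightarrow> x = a) \<or> (\<forall>x\<in>A. dle X D a x \<longrightarrow> x = a)}"

text \<open>Extremal model: Xs = [X_0, ..., X_n], with P_(i+1) given by (Po i, Pm i).\<close>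
definition extremal_model :: "'a topology \<Rightarrow> (real \<Rightarrow> 'a) set \<Rightarrow> 'a set list \<Rightarrow>
    (nat \<Rightarrow> 'a \<Rightarrow> 'a) \<Rightarrow> (nat \<Rightarrow> (real \<Rightarrow> 'a) set \<Rightarrow> (real \<Rightarrow> 'a) set) \<Rightarrow> bool" where
  "extremal_model X D Xs Po Pm \<longleftrightarrow> Xs \<noteq> [] \<and> hd Xs = topspace X \<and>
     (\<forall>i < length Xs - 1. Xs ! (Suc i) \<subseteq> Xs ! i \<and>
        (future_retract X D (Xs ! i) (Xs ! Suc i) (Po i) (Pm i) \<or>
         past_retract X D (Xs ! i) (Xs ! Suc i) (Po i) (Pm i))) \<and>
     Ext X D (topspace X) \<subseteq> last Xs"

end

theory Submission
  imports Defs
begin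

(* Being extremal is inherited by subsets: if a is minimal (maximal)
   for the preorder "there is a dipath class x -> y" among all objects of B, it is
   a fortiori minimal (maximal) among the objects of any A \<subseteq> B that contain it,
   since the preorder on the full subcategory on A is the restriction of the one on B.
   An extremal model X = X_0 \<supseteq> ... \<supseteq> X_n = A has A \<subseteq> X by the descending chain
   condition and Ext(X) \<subseteq> A by definition, so every extremal object of X lies in A
   and is extremal there. *)

lemma Ext_restrict:
  assumes "A \<subseteq> B"
  shows "Ext X D B \<inter> A \<subseteq> Ext X D A"
  using assms unfolding Ext_def by blast

lemma descending_chain_nth_subset_hd:
  assumes chain: "\<forall>i < length Xs - 1. Xs ! Suc i \<subseteq> Xs ! i"
    and "i < length Xs"
  shows "Xs ! i \<subseteq> Xs ! 0"
  using assms(2)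
proof (induction i)
  case 0
  then show ?case by simp
next
  case (Suc i)
  then have "Xs ! Suc i \<subseteq> Xs ! i" using chain by simp
  then show ?case using Suc by simp
qed

lemma descending_chain_last_subset_hd:
  assumes "Xs \<noteq> []" and "\<forall>i < length Xs - 1. Xs ! Suc i \<subseteq> Xs ! i"
  shows "last Xs \<subseteq> hd Xs"
  using descending_chain_nth_subset_hd[OF assms(2), of "length Xs - 1"] assms(1)
  by (simp add: last_conv_nth hd_conv_nth)

lemma extremal_model_last:
  assumes "extremal_model X D Xs Po Pm"
  shows "last Xs \<subseteq> topspace X" and "Ext X D (topspace X) \<subseteq> last Xs"
  using assms descending_chain_last_subset_hd[of Xs]
  unfolding extremal_model_def by auto

theorem proposition3p1:
  fixes X :: "'a topology" and D :: "(real \<Rightarrow> 'a) set" and Xs :: "'a set list" and A :: "'a set"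
    and Po :: "nat \<Rightarrow> 'a \<Rightarrow> 'a" and Pm :: "nat \<Rightarrow> (real \<Rightarrow> 'a) set \<Rightarrow> (real \<Rightarrow> 'a) set"
  assumes "d_space X D"
    and "extremal_model X D Xs Po Pm"
    and "last Xs = A"
  shows "Ext X D (topspace X) \<subseteq> Ext X D A"
proof -
  have "A \<subseteq> topspace X" and "Ext X D (topspace X) \<subseteq> A"
    using extremal_model_last[OF assms(2)] assms(3) by auto
  then show ?thesis using Ext_restrict[of A "topspace X" X D] by blast
qed

end
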